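(* Let $a<b$ be real numbers and let $h:[a,b]\to\mathbb{R}$ have a continuous first derivative that is uniformly bounded on $[a,b]$. For $n\ge2$ define $x_{i,n}=a+(b-a)\frac{i-1}{n-1}$, $i=1,\dots,n$. Let $\varepsilon_1,\varepsilon_2,\dots$ be i.i.d. random variables with a non-degenerate cdf $F_\varepsilon$, mean $0$ and finite variance, and put $Y_{i,n}=h(x_{i,n})+\varepsilon_i$. Define $$A_n=\frac{1}{\sqrt n}\sum_{i=2}^n\big(Y_{i,n}-Y_{i-1,n}\big)_+,\qquad B_n=\frac{1}{\sqrt n}\sum_{i=2}^n\big|Y_{i,n}-Y_{i-1,n}\big|,\qquad I_n=\frac{A_n}{B_n},$$ where $x_+=\max\{x,0\}$. Then $I_n\to 1/2$ in probability as $n\to\infty$. *)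

theory Defs
  imports "HOL-Probability.Probability"
begin

definition conv_in_prob :: "'a measure \<Rightarrow> (nat \<Rightarrow> 'a \<Rightarrow> real) \<Rightarrow> real \<Rightarrow> bool" where
  "conv_in_prob M X c \<longleftrightarrow>
     (\<forall>e>0. (\<lambda>n. measure M {\<omega> \<in> space M. \<bar>X n \<omega> - c\<bar> > e}) \<longlonglongrightarrow> 0)"

definition design_pt :: "real \<Rightarrow> real \<Rightarrow> nat \<Rightarrow> nat \<Rightarrow> real" where
  "design_pt a b n i = a + (b - a) * (real i - 1) / (real n - 1)"

definition pos_part :: "real \<Rightarrow> real" where
  "pos_part x = max x 0"

end

theory Submission
  imports Defs
begin

text \<open>Because \<open>pos_part x = (\<bar>x\<bar> + x) / 2\<close>, we have \<open>I_n = 1/2 + U_n / (2 T_n)\<close>, where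
  \<open>T_n\<close> is the sum of the \<open>\<bar>Y_i - Y_(i-1)\<bar>\<close> and, by telescoping,
  \<open>U_n = Y_n - Y_1 = h b - h a + \<epsilon>_n - \<epsilon>_1\<close> is bounded in probability. Since \<open>h\<close> is
  Lipschitz, \<open>T_n\<close> differs from the sum of the \<open>\<bar>\<epsilon>_i - \<epsilon>_(i-1)\<bar>\<close> by at most \<open>L (b - a)\<close>.
  These summands have a common mean \<open>\<mu> > 0\<close> (\<open>\<mu> = 0\<close> would force
  \<open>E (\<epsilon>_2 - \<epsilon>_1)\<^sup>2 = 2 Var \<epsilon>_1\<close> to vanish) and are independent at lag two, so their sum
  has variance \<open>O(n)\<close> and Chebyshev's inequality gives \<open>T_n \<ge> n \<mu> / 2\<close> with probability
  tending to one.\<close>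

section \<open>The positive-part ratio\<close>

definition pos_part_ratio :: "(nat \<Rightarrow> real) \<Rightarrow> nat \<Rightarrow> real" where
  "pos_part_ratio y n =
     (\<Sum>i=2..n. pos_part (y i - y (i - 1))) / (\<Sum>i=2..n. \<bar>y i - y (i - 1)\<bar>)"

lemma pos_part_eq_half_abs_add: "pos_part x = (\<bar>x\<bar> + x) / 2"
  unfolding pos_part_def by auto

lemma abs_pos_part_ratio_sub_half_le:
  assumes "n \<ge> 1" "0 < \<tau>" "\<tau> \<le> (\<Sum>i=2..n. \<bar>y i - y (i - 1)\<bar>)"
    and "\<bar>y n - y 1\<bar> \<le> 2 * e * \<tau>"
  shows "\<bar>pos_part_ratio y n - 1/2\<bar> \<le> e"
proof -
  define T where "T = (\<Sum>i=2..n. \<bar>y i - y (i - 1)\<bar>)"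
  have "0 < T" "\<tau> \<le> T" using assms unfolding T_def by auto
  have "(\<Sum>i=2..n. y i - y (i - 1)) = y n - y 1"
    using sum_telescope''[OF assms(1), of y] by (simp add: numeral_2_eq_2)
  then have "pos_part_ratio y n = (T + (y n - y 1)) / (2 * T)"
    unfolding pos_part_ratio_def pos_part_eq_half_abs_add T_def
    by (simp add: sum.distrib flip: sum_divide_distrib)
  then have "pos_part_ratio y n - 1/2 = (y n - y 1) / (2 * T)"
    using \<open>0 < T\<close> by (simp add: field_simps)
  then have "\<bar>pos_part_ratio y n - 1/2\<bar> = \<bar>y n - y 1\<bar> / (2 * T)"
    using \<open>0 < T\<close> by simp
  also have "\<dots> \<le> e"
  proof -
    have "0 \<le> e" using assms(2,4) by (smt (verit) zero_le_mult_iff)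
    with \<open>\<tau> \<le> T\<close> have "e * \<tau> \<le> e * T" by (rule mult_left_mono)
    then have "\<bar>y n - y 1\<bar> \<le> e * (2 * T)" using assms(4) by linarith
    then show ?thesis using \<open>0 < T\<close> by (simp add: pos_divide_le_eq)
  qed
  finally show ?thesis .
qed

section \<open>Regression function at the design points\<close>

lemma design_pt_mem:
  assumes "a \<le> b" "1 \<le> i" "i \<le> n"
  shows "design_pt a b n i \<in> {a..b}"
proof -
  define t where "t = (real i - 1) / (real n - 1)"
  have "0 \<le> t" "t \<le> 1"
    using assms unfolding t_def by (auto simp: divide_le_eq_1)
  then have "0 \<le> (b - a) * t" "(b - a) * t \<le> b - a"
    using assms(1) by (auto simp: mult_left_le)
  then show ?thesis unfolding design_pt_def t_def by auto
qed

lemma design_pt_diff: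
  assumes "2 \<le> i"
  shows "design_pt a b n i - design_pt a b n (i - 1) = (b - a) / (real n - 1)"
proof -
  have "(b - a) * (real i - 1) - (b - a) * (real (i - 1) - 1) = b - a"
    using assms by (simp add: algebra_simps)
  then show ?thesis unfolding design_pt_def by (simp add: diff_divide_distrib[symmetric])
qed

lemma sum_abs_diff_design_pt_le:
  assumes "a \<le> b" "n \<ge> 2"
    and lipschitz: "\<And>x y. x \<in> {a..b} \<Longrightarrow> y \<in> {a..b} \<Longrightarrow> \<bar>h x - h y\<bar> \<le> L * \<bar>x - y\<bar>"
  shows "(\<Sum>i=2..n. \<bar>h (design_pt a b n i) - h (design_pt a b n (i - 1))\<bar>) \<le> L * (b - a)"
proof -
  have "(\<Sum>i=2..n. \<bar>h (design_pt a b n i) - h (design_pt a b n (i - 1))\<bar>)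
      \<le> (\<Sum>i=2..n. L * ((b - a) / (real n - 1)))"
  proof (rule sum_mono)
    fix i assume i: "i \<in> {2..n}"
    have "design_pt a b n i - design_pt a b n (i - 1) = (b - a) / (real n - 1)"
      by (rule design_pt_diff) (use i in auto)
    moreover have "0 \<le> (b - a) / (real n - 1)" using assms(1,2) by simp
    ultimately have "\<bar>design_pt a b n i - design_pt a b n (i - 1)\<bar> = (b - a) / (real n - 1)"
      by (metis abs_of_nonneg)
    moreover have "\<bar>h (design_pt a b n i) - h (design_pt a b n (i - 1))\<bar>
        \<le> L * \<bar>design_pt a b n i - design_pt a b n (i - 1)\<bar>"
      using i assms(1) by (intro lipschitz design_pt_mem) auto
    ultimately show "\<bar>h (design_pt a b n i) - h (design_pt a b n (i - 1))\<bar>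
        \<le> L * ((b - a) / (real n - 1))"
      by simp
  qed
  also have "\<dots> = L * (b - a)" using assms(2) by simp
  finally show ?thesis .
qed

lemma lipschitz_on_interval_if_deriv_bounded:
  fixes h h' :: "real \<Rightarrow> real"
  assumes "\<forall>x\<in>{a..b}. (h has_real_derivative h' x) (at x within {a..b})"
    and "bounded (h' ` {a..b})"
  obtains L where "\<And>x y. x \<in> {a..b} \<Longrightarrow> y \<in> {a..b} \<Longrightarrow> \<bar>h x - h y\<bar> \<le> L * \<bar>x - y\<bar>"
proof -
  obtain L where L: "\<forall>y\<in>h' ` {a..b}. norm y \<le> L"
    using assms(2) unfolding bounded_iff by blast
  have "norm (h x - h y) \<le> L * norm (x - y)" if "x \<in> {a..b}" "y \<in> {a..b}" for x y
    using assms(1) L that by (intro field_differentiable_bound[of "{a..b}"]) auto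
  then show ?thesis using that by auto
qed

section \<open>Increments of i.i.d. noise\<close>

lemma power2_diff_le_twice_sum_sq: "(x - y)\<^sup>2 \<le> 2 * x\<^sup>2 + 2 * (y :: real)\<^sup>2"
  using sum_squares_bound[of x "- y"] by (simp add: power2_diff)

locale iid_noise = prob_space M for M :: "'a measure" +
  fixes \<epsilon> :: "nat \<Rightarrow> 'a \<Rightarrow> real"
  assumes indep: "indep_vars (\<lambda>_. borel) \<epsilon> {1..}"
    and identically_distributed: "\<And>i. i \<ge> 1 \<Longrightarrow> distr M borel (\<epsilon> i) = distr M borel (\<epsilon> 1)"
    and mean_zero: "(\<integral>\<omega>. \<epsilon> 1 \<omega> \<partial>M) = 0"
    and square_integrable: "integrable M (\<lambda>\<omega>. (\<epsilon> 1 \<omega>)\<^sup>2)"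
    and nondegenerate: "\<not> (\<exists>c. AE \<omega> in M. \<epsilon> 1 \<omega> = c)"
begin

lemma measurable_noise: "i \<ge> 1 \<Longrightarrow> \<epsilon> i \<in> borel_measurable M"
  using indep unfolding indep_vars_def by auto

lemma indep_var_noise:
  assumes "i \<ge> 1" "j \<ge> 1" "i \<noteq> j"
  shows "indep_var borel (\<epsilon> i) borel (\<epsilon> j)"
proof -
  have "indep_var (PiM {i} (\<lambda>_. borel)) (\<lambda>\<omega>. restrict (\<lambda>k. \<epsilon> k \<omega>) {i})
                  (PiM {j} (\<lambda>_. borel)) (\<lambda>\<omega>. restrict (\<lambda>k. \<epsilon> k \<omega>) {j})"
    using assms by (intro indep_var_restrict[OF indep]) auto
  from indep_var_compose[OF this measurable_component_singleton[of i "{i}" "\<lambda>_. borel"]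
        measurable_component_singleton[of j "{j}" "\<lambda>_. borel"]]
  show ?thesis by (simp add: comp_def)
qed

lemma
  fixes f :: "real \<Rightarrow> real"
  assumes "i \<ge> 1" and [measurable]: "f \<in> borel_measurable borel"
  shows integrable_comp_noise_iff:
      "integrable M (\<lambda>\<omega>. f (\<epsilon> i \<omega>)) \<longleftrightarrow> integrable M (\<lambda>\<omega>. f (\<epsilon> 1 \<omega>))"
    and integral_comp_noise: "(\<integral>\<omega>. f (\<epsilon> i \<omega>) \<partial>M) = (\<integral>\<omega>. f (\<epsilon> 1 \<omega>) \<partial>M)"
proof -
  have [measurable]: "\<epsilon> i \<in> borel_measurable M" "\<epsilon> 1 \<in> borel_measurable M"
    using measurable_noise assms(1) by auto
  show "integrable M (\<lambda>\<omega>. f (\<epsilon> i \<omega>)) \<longleftrightarrow> integrable M (\<lambda>\<omega>. f (\<epsilon> 1 \<omega>))"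
    using integrable_distr_eq[of "\<epsilon> i" M borel f] integrable_distr_eq[of "\<epsilon> 1" M borel f]
      measurable_noise[of 1] by (simp add: identically_distributed[OF assms(1)])
  show "(\<integral>\<omega>. f (\<epsilon> i \<omega>) \<partial>M) = (\<integral>\<omega>. f (\<epsilon> 1 \<omega>) \<partial>M)"
    using integral_distr[of "\<epsilon> i" M borel f] integral_distr[of "\<epsilon> 1" M borel f]
      measurable_noise[of 1] by (simp add: identically_distributed[OF assms(1)])
qed

definition noise_var :: real where
  "noise_var = (\<integral>\<omega>. (\<epsilon> 1 \<omega>)\<^sup>2 \<partial>M)"

lemma integrable_noise_sq: "i \<ge> 1 \<Longrightarrow> integrable M (\<lambda>\<omega>. (\<epsilon> i \<omega>)\<^sup>2)"
  using integrable_comp_noise_iff[of i "\<lambda>x. x\<^sup>2"] square_integrable by simp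

lemma integrable_noise: "i \<ge> 1 \<Longrightarrow> integrable M (\<epsilon> i)"
  using measurable_noise integrable_noise_sq by (blast intro: square_integrable_imp_integrable)

lemma integral_noise_eq_0: "i \<ge> 1 \<Longrightarrow> (\<integral>\<omega>. \<epsilon> i \<omega> \<partial>M) = 0"
  using integral_comp_noise[of i "\<lambda>x. x"] mean_zero by simp

lemma integral_noise_sq: "i \<ge> 1 \<Longrightarrow> (\<integral>\<omega>. (\<epsilon> i \<omega>)\<^sup>2 \<partial>M) = noise_var"
  using integral_comp_noise[of i "\<lambda>x. x\<^sup>2"] unfolding noise_var_def by simp

lemma noise_var_nonneg: "0 \<le> noise_var"
  unfolding noise_var_def by simp

lemma measure_abs_noise_ge_le:
  assumes "i \<ge> 1" "s > 0"
  shows "measure M {\<omega>\<in>space M. s \<le> \<bar>\<epsilon> i \<omega>\<bar>} \<le> noise_var / s\<^sup>2"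
  using second_moment_method[OF measurable_noise integrable_noise_sq] assms
  by (simp add: integral_noise_sq)

definition noise_distr :: "real measure" where
  "noise_distr = distr M borel (\<epsilon> 1)"

lemma integral_noise_pair:
  fixes g :: "real \<times> real \<Rightarrow> real"
  assumes "i \<ge> 1" "j \<ge> 1" "i \<noteq> j" and g: "g \<in> borel_measurable (borel \<Otimes>\<^sub>M borel)"
  shows "(\<integral>\<omega>. g (\<epsilon> i \<omega>, \<epsilon> j \<omega>) \<partial>M) = integral\<^sup>L (noise_distr \<Otimes>\<^sub>M noise_distr) g"
proof -
  have [measurable]: "\<epsilon> i \<in> borel_measurable M" "\<epsilon> j \<in> borel_measurable M"
    using measurable_noise assms by auto
  have pair: "(\<lambda>\<omega>. (\<epsilon> i \<omega>, \<epsilon> j \<omega>)) \<in> measurable M (borel \<Otimes>\<^sub>M borel)"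
    by measurable
  have "noise_distr \<Otimes>\<^sub>M noise_distr = distr M borel (\<epsilon> i) \<Otimes>\<^sub>M distr M borel (\<epsilon> j)"
    unfolding noise_distr_def
    using identically_distributed[OF assms(1)] identically_distributed[OF assms(2)] by simp
  also have "\<dots> = distr M (borel \<Otimes>\<^sub>M borel) (\<lambda>\<omega>. (\<epsilon> i \<omega>, \<epsilon> j \<omega>))"
    using indep_var_noise[OF assms(1-3)] unfolding indep_var_distribution_eq by blast
  finally show ?thesis
    using integral_distr[OF pair g] by simp
qed

definition mean_abs_diff :: real where
  "mean_abs_diff = (\<integral>p. \<bar>snd p - fst p\<bar> \<partial>(noise_distr \<Otimes>\<^sub>M noise_distr))"

definition abs_diff_var :: real where
  "abs_diff_var = (\<integral>p. (\<bar>snd p - fst p\<bar> - mean_abs_diff)\<^sup>2 \<partial>(noise_distr \<Otimes>\<^sub>M noise_distr))"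

definition centered_abs_incr :: "nat \<Rightarrow> 'a \<Rightarrow> real" where
  "centered_abs_incr i \<omega> = \<bar>\<epsilon> i \<omega> - \<epsilon> (i - 1) \<omega>\<bar> - mean_abs_diff"

lemma measurable_centered_abs_incr:
  assumes "i \<ge> 2" shows "centered_abs_incr i \<in> borel_measurable M"
proof -
  have [measurable]: "\<epsilon> i \<in> borel_measurable M" "\<epsilon> (i - 1) \<in> borel_measurable M"
    using measurable_noise assms by auto
  show ?thesis unfolding centered_abs_incr_def by measurable
qed

lemma integrable_abs_incr:
  assumes "i \<ge> 2" shows "integrable M (\<lambda>\<omega>. \<bar>\<epsilon> i \<omega> - \<epsilon> (i - 1) \<omega>\<bar>)"
proof -
  have "integrable M (\<epsilon> i)" "integrable M (\<epsilon> (i - 1))"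
    using integrable_noise assms by auto
  then show ?thesis by (intro integrable_abs Bochner_Integration.integrable_diff)
qed

lemma integral_abs_incr:
  assumes "i \<ge> 2" shows "(\<integral>\<omega>. \<bar>\<epsilon> i \<omega> - \<epsilon> (i - 1) \<omega>\<bar> \<partial>M) = mean_abs_diff"
proof -
  have "(\<lambda>p. \<bar>snd p - fst p\<bar>) \<in> borel_measurable (borel \<Otimes>\<^sub>M (borel :: real measure))"
    by measurable
  from integral_noise_pair[of "i - 1" i, OF _ _ _ this] assms show ?thesis
    unfolding mean_abs_diff_def by simp
qed

lemma integral_centered_abs_incr:
  assumes "i \<ge> 2" shows "(\<integral>\<omega>. centered_abs_incr i \<omega> \<partial>M) = 0"
proof -
  have "(\<integral>\<omega>. centered_abs_incr i \<omega> \<partial>M) = (\<integral>\<omega>. \<bar>\<epsilon> i \<omega> - \<epsilon> (i - 1) \<omega>\<bar> \<partial>M) - mean_abs_diff"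
    unfolding centered_abs_incr_def using integrable_abs_incr[OF assms] by (simp add: prob_space)
  then show ?thesis using integral_abs_incr[OF assms] by simp
qed

lemma integral_centered_abs_incr_sq:
  assumes "i \<ge> 2" shows "(\<integral>\<omega>. (centered_abs_incr i \<omega>)\<^sup>2 \<partial>M) = abs_diff_var"
proof -
  have "(\<lambda>p. (\<bar>snd p - fst p\<bar> - mean_abs_diff)\<^sup>2) \<in> borel_measurable (borel \<Otimes>\<^sub>M (borel :: real measure))"
    by measurable
  from integral_noise_pair[of "i - 1" i, OF _ _ _ this] assms show ?thesis
    unfolding abs_diff_var_def centered_abs_incr_def by simp
qed

lemma abs_diff_var_nonneg: "0 \<le> abs_diff_var"
proof -
  have "0 \<le> (\<integral>\<omega>. (centered_abs_incr 2 \<omega>)\<^sup>2 \<partial>M)" by simp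
  then show ?thesis by (simp add: integral_centered_abs_incr_sq)
qed

lemma integrable_centered_abs_incr: "i \<ge> 2 \<Longrightarrow> integrable M (centered_abs_incr i)"
  unfolding centered_abs_incr_def using integrable_abs_incr by simp

lemma integrable_centered_abs_incr_sq:
  assumes "i \<ge> 2" shows "integrable M (\<lambda>\<omega>. (centered_abs_incr i \<omega>)\<^sup>2)"
proof (rule Bochner_Integration.integrable_bound)
  show "integrable M (\<lambda>\<omega>. 4 * (\<epsilon> i \<omega>)\<^sup>2 + 4 * (\<epsilon> (i - 1) \<omega>)\<^sup>2 + 2 * mean_abs_diff\<^sup>2)"
    using integrable_noise_sq[of i] integrable_noise_sq[of "i - 1"] assms by auto
  show "(\<lambda>\<omega>. (centered_abs_incr i \<omega>)\<^sup>2) \<in> borel_measurable M"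
    using measurable_centered_abs_incr[OF assms] by measurable
  have "(centered_abs_incr i \<omega>)\<^sup>2 \<le> 2 * (\<epsilon> i \<omega> - \<epsilon> (i - 1) \<omega>)\<^sup>2 + 2 * mean_abs_diff\<^sup>2"
    "(\<epsilon> i \<omega> - \<epsilon> (i - 1) \<omega>)\<^sup>2 \<le> 2 * (\<epsilon> i \<omega>)\<^sup>2 + 2 * (\<epsilon> (i - 1) \<omega>)\<^sup>2" for \<omega>
    unfolding centered_abs_incr_def using power2_diff_le_twice_sum_sq by (metis power2_abs)+
  then show "AE \<omega> in M. norm ((centered_abs_incr i \<omega>)\<^sup>2)
      \<le> norm (4 * (\<epsilon> i \<omega>)\<^sup>2 + 4 * (\<epsilon> (i - 1) \<omega>)\<^sup>2 + 2 * mean_abs_diff\<^sup>2)"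
    by (intro AE_I2) (smt (verit) real_norm_def zero_le_power2)
qed

lemma indep_var_centered_abs_incr:
  assumes "i \<ge> 2" "i + 1 < j"
  shows "indep_var borel (centered_abs_incr i) borel (centered_abs_incr j)"
proof -
  define abs_incr where "abs_incr k f = \<bar>f k - f (k - 1)\<bar> - mean_abs_diff" for k and f :: "nat \<Rightarrow> real"
  have m: "abs_incr k \<in> borel_measurable (PiM {k - 1, k} (\<lambda>_. borel))" for k
    unfolding abs_incr_def by measurable
  have "indep_var (PiM {i - 1, i} (\<lambda>_. borel)) (\<lambda>\<omega>. restrict (\<lambda>k. \<epsilon> k \<omega>) {i - 1, i})
      (PiM {j - 1, j} (\<lambda>_. borel)) (\<lambda>\<omega>. restrict (\<lambda>k. \<epsilon> k \<omega>) {j - 1, j})"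
    using assms by (intro indep_var_restrict[OF indep]) auto
  from indep_var_compose[OF this m m] show ?thesis
    by (simp add: comp_def abs_incr_def centered_abs_incr_def[abs_def])
qed

lemma integral_centered_abs_incr_mult_eq_0:
  assumes "i \<ge> 2" "i + 1 < j"
  shows "(\<integral>\<omega>. centered_abs_incr i \<omega> * centered_abs_incr j \<omega> \<partial>M) = 0"
  using indep_var_lebesgue_integral[OF indep_var_centered_abs_incr[OF assms]
      integrable_centered_abs_incr integrable_centered_abs_incr] assms
  by (simp add: integral_centered_abs_incr)

lemma
  assumes "i \<ge> 2" "j \<ge> 2"
  shows integrable_centered_abs_incr_mult:
      "integrable M (\<lambda>\<omega>. centered_abs_incr i \<omega> * centered_abs_incr j \<omega>)"
    and integral_centered_abs_incr_mult_le:
      "(\<integral>\<omega>. centered_abs_incr i \<omega> * centered_abs_incr j \<omega> \<partial>M) \<le> abs_diff_var"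
proof -
  let ?sq = "\<lambda>\<omega>. ((centered_abs_incr i \<omega>)\<^sup>2 + (centered_abs_incr j \<omega>)\<^sup>2) / 2"
  have sq: "integrable M ?sq"
    using integrable_centered_abs_incr_sq assms by simp
  have am_gm: "\<bar>centered_abs_incr i \<omega> * centered_abs_incr j \<omega>\<bar> \<le> ?sq \<omega>" for \<omega>
    using sum_squares_bound[of "\<bar>centered_abs_incr i \<omega>\<bar>" "\<bar>centered_abs_incr j \<omega>\<bar>"]
    by (simp add: abs_mult)
  show int: "integrable M (\<lambda>\<omega>. centered_abs_incr i \<omega> * centered_abs_incr j \<omega>)"
    using sq am_gm measurable_centered_abs_incr assms
    by (intro Bochner_Integration.integrable_bound[OF sq]) auto
  have "(\<integral>\<omega>. centered_abs_incr i \<omega> * centered_abs_incr j \<omega> \<partial>M) \<le> (\<integral>\<omega>. ?sq \<omega> \<partial>M)"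
    using am_gm by (intro integral_mono[OF int sq]) (meson abs_ge_self order_trans)
  also have "\<dots> = abs_diff_var"
    using integrable_centered_abs_incr_sq assms by (simp add: integral_centered_abs_incr_sq)
  finally show "(\<integral>\<omega>. centered_abs_incr i \<omega> * centered_abs_incr j \<omega> \<partial>M) \<le> abs_diff_var" .
qed

lemma sum_integral_centered_abs_incr_mult_le:
  assumes "finite I" "I \<subseteq> {2..}" "i \<ge> 2"
  shows "(\<Sum>j\<in>I. \<integral>\<omega>. centered_abs_incr i \<omega> * centered_abs_incr j \<omega> \<partial>M) \<le> 3 * abs_diff_var"
proof -
  have "(\<Sum>j\<in>I. \<integral>\<omega>. centered_abs_incr i \<omega> * centered_abs_incr j \<omega> \<partial>M)
      \<le> (\<Sum>j\<in>I. if j \<in> {i - 1..i + 1} then abs_diff_var else 0)"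
  proof (rule sum_mono)
    fix j assume "j \<in> I"
    then have "j \<ge> 2" using assms(2) by auto
    consider "j \<in> {i - 1..i + 1}" | "i + 1 < j" | "j + 1 < i" by fastforce
    then show "(\<integral>\<omega>. centered_abs_incr i \<omega> * centered_abs_incr j \<omega> \<partial>M)
        \<le> (if j \<in> {i - 1..i + 1} then abs_diff_var else 0)"
    proof cases
      case 1
      then show ?thesis using integral_centered_abs_incr_mult_le[OF assms(3) \<open>j \<ge> 2\<close>] by simp
    next
      case 2
      then show ?thesis using integral_centered_abs_incr_mult_eq_0[OF assms(3)] by simp
    next
      case 3
      then show ?thesis
        using integral_centered_abs_incr_mult_eq_0[OF \<open>j \<ge> 2\<close>] by (simp add: mult.commute)
    qed
  qed
  also have "\<dots> = (\<Sum>j\<in>{j\<in>I. j \<in> {i - 1..i + 1}}. abs_diff_var)"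
    using assms(1) by (rule sum.inter_filter[symmetric])
  also have "\<dots> \<le> (\<Sum>j\<in>{i - 1..i + 1}. abs_diff_var)"
    using abs_diff_var_nonneg by (intro sum_mono2) auto
  also have "\<dots> = 3 * abs_diff_var" using assms(3) by simp
  finally show ?thesis .
qed

lemma integral_sum_centered_abs_incr_sq_le:
  assumes "finite I" "I \<subseteq> {2..}"
  shows "(\<integral>\<omega>. (\<Sum>i\<in>I. centered_abs_incr i \<omega>)\<^sup>2 \<partial>M) \<le> 3 * abs_diff_var * card I"
proof -
  have "(\<integral>\<omega>. (\<Sum>i\<in>I. centered_abs_incr i \<omega>)\<^sup>2 \<partial>M)
      = (\<Sum>i\<in>I. \<Sum>j\<in>I. \<integral>\<omega>. centered_abs_incr i \<omega> * centered_abs_incr j \<omega> \<partial>M)"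
    unfolding power2_eq_square sum_product using assms
    by (simp add: subset_eq integrable_centered_abs_incr_mult Bochner_Integration.integral_sum
        Bochner_Integration.integrable_sum)
  also have "\<dots> \<le> (\<Sum>i\<in>I. 3 * abs_diff_var)"
    using assms by (intro sum_mono sum_integral_centered_abs_incr_mult_le) auto
  finally show ?thesis by (simp add: mult_ac)
qed

lemma measure_abs_sum_centered_abs_incr_ge_le:
  assumes "finite I" "I \<subseteq> {2..}" "t > 0"
  shows "measure M {\<omega>\<in>space M. t \<le> \<bar>\<Sum>i\<in>I. centered_abs_incr i \<omega>\<bar>} \<le> 3 * abs_diff_var * card I / t\<^sup>2"
proof -
  have "(\<lambda>\<omega>. \<Sum>i\<in>I. centered_abs_incr i \<omega>) \<in> borel_measurable M"
    using assms measurable_centered_abs_incr by (intro borel_measurable_sum) auto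
  moreover have "integrable M (\<lambda>\<omega>. (\<Sum>i\<in>I. centered_abs_incr i \<omega>)\<^sup>2)"
    unfolding power2_eq_square sum_product using assms
    by (intro Bochner_Integration.integrable_sum integrable_centered_abs_incr_mult) auto
  ultimately have "measure M {\<omega>\<in>space M. t \<le> \<bar>\<Sum>i\<in>I. centered_abs_incr i \<omega>\<bar>}
      \<le> (\<integral>\<omega>. (\<Sum>i\<in>I. centered_abs_incr i \<omega>)\<^sup>2 \<partial>M) / t\<^sup>2"
    using assms(3) by (intro second_moment_method) auto
  also have "\<dots> \<le> 3 * abs_diff_var * card I / t\<^sup>2"
    using integral_sum_centered_abs_incr_sq_le[OF assms(1,2)] by (simp add: divide_right_mono)
  finally show ?thesis .
qed

lemma tendsto_measure_abs_sum_centered_abs_incr_ge: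
  assumes "t > 0"
  shows "(\<lambda>n. measure M {\<omega>\<in>space M. real n * t \<le> \<bar>\<Sum>i=2..n. centered_abs_incr i \<omega>\<bar>}) \<longlonglongrightarrow> 0"
proof (rule tendsto_sandwich[OF _ _ tendsto_const lim_const_over_n])
  show "\<forall>\<^sub>F n in sequentially.
      measure M {\<omega>\<in>space M. real n * t \<le> \<bar>\<Sum>i=2..n. centered_abs_incr i \<omega>\<bar>}
      \<le> 3 * abs_diff_var / t\<^sup>2 / real n"
  proof (rule eventually_sequentiallyI)
    fix n :: nat assume "n \<ge> 1"
    have "measure M {\<omega>\<in>space M. real n * t \<le> \<bar>\<Sum>i=2..n. centered_abs_incr i \<omega>\<bar>}
        \<le> 3 * abs_diff_var * card {2..n} / (real n * t)\<^sup>2"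
      using \<open>n \<ge> 1\<close> assms by (intro measure_abs_sum_centered_abs_incr_ge_le) auto
    also have "\<dots> \<le> 3 * abs_diff_var * real n / (real n * t)\<^sup>2"
      using abs_diff_var_nonneg by (intro divide_right_mono mult_left_mono) auto
    also have "\<dots> = 3 * abs_diff_var / t\<^sup>2 / real n"
      using \<open>n \<ge> 1\<close> by (simp add: power2_eq_square)
    finally show "measure M {\<omega>\<in>space M. real n * t \<le> \<bar>\<Sum>i=2..n. centered_abs_incr i \<omega>\<bar>}
        \<le> 3 * abs_diff_var / t\<^sup>2 / real n" .
  qed
qed simp

lemma tendsto_measure_abs_noise_ge:
  assumes "t > 0" and "\<forall>\<^sub>F n in sequentially. k n \<ge> 1"
  shows "(\<lambda>n. measure M {\<omega>\<in>space M. real n * t \<le> \<bar>\<epsilon> (k n) \<omega>\<bar>}) \<longlonglongrightarrow> 0"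
proof (rule tendsto_sandwich[OF _ _ tendsto_const lim_const_over_n])
  have bound: "measure M {\<omega>\<in>space M. real n * t \<le> \<bar>\<epsilon> (k n) \<omega>\<bar>} \<le> noise_var / t\<^sup>2 / real n"
    if "k n \<ge> 1" "n \<ge> 1" for n
  proof -
    have "measure M {\<omega>\<in>space M. real n * t \<le> \<bar>\<epsilon> (k n) \<omega>\<bar>} \<le> noise_var / (real n * t)\<^sup>2"
      using that assms(1) by (intro measure_abs_noise_ge_le) auto
    also have "\<dots> \<le> noise_var / (real n * t\<^sup>2)"
      using that assms(1) noise_var_nonneg
      by (intro divide_left_mono) (auto simp: power2_eq_square)
    finally show ?thesis by (simp add: ac_simps)
  qed
  show "\<forall>\<^sub>F n in sequentially.
      measure M {\<omega>\<in>space M. real n * t \<le> \<bar>\<epsilon> (k n) \<omega>\<bar>} \<le> noise_var / t\<^sup>2 / real n"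
    using assms(2) eventually_ge_at_top[of 1] by eventually_elim (rule bound)
qed simp

lemma integral_noise_diff_sq: "(\<integral>\<omega>. (\<epsilon> 2 \<omega> - \<epsilon> 1 \<omega>)\<^sup>2 \<partial>M) = 2 * noise_var"
proof -
  have "(\<integral>\<omega>. \<epsilon> 2 \<omega> * \<epsilon> 1 \<omega> \<partial>M) = 0"
    using indep_var_lebesgue_integral[OF indep_var_noise[of 2 1] integrable_noise integrable_noise]
    by (simp add: integral_noise_eq_0)
  moreover have "integrable M (\<lambda>\<omega>. \<epsilon> 2 \<omega> * \<epsilon> 1 \<omega>)"
    by (rule indep_var_integrable[OF indep_var_noise integrable_noise integrable_noise]) auto
  moreover have "(\<lambda>\<omega>. (\<epsilon> 2 \<omega> - \<epsilon> 1 \<omega>)\<^sup>2)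
      = (\<lambda>\<omega>. (\<epsilon> 2 \<omega>)\<^sup>2 - 2 * (\<epsilon> 2 \<omega> * \<epsilon> 1 \<omega>) + (\<epsilon> 1 \<omega>)\<^sup>2)"
    by (simp add: power2_diff fun_eq_iff)
  ultimately show ?thesis
    using integrable_noise_sq[of 1] integrable_noise_sq[of 2]
      integral_noise_sq[of 1] integral_noise_sq[of 2]
    by simp
qed

lemma mean_abs_diff_pos: "mean_abs_diff > 0"
proof (rule ccontr)
  assume "\<not> mean_abs_diff > 0"
  moreover have "mean_abs_diff = (\<integral>\<omega>. \<bar>\<epsilon> 2 \<omega> - \<epsilon> 1 \<omega>\<bar> \<partial>M)"
    using integral_abs_incr[of 2] by simp
  moreover have "0 \<le> (\<integral>\<omega>. \<bar>\<epsilon> 2 \<omega> - \<epsilon> 1 \<omega>\<bar> \<partial>M)" by simp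
  ultimately have "(\<integral>\<omega>. \<bar>\<epsilon> 2 \<omega> - \<epsilon> 1 \<omega>\<bar> \<partial>M) = 0" by linarith
  then have "AE \<omega> in M. \<bar>\<epsilon> 2 \<omega> - \<epsilon> 1 \<omega>\<bar> = 0"
    using integrable_abs_incr[of 2] by (subst integral_nonneg_eq_0_iff_AE[symmetric]) auto
  then have "AE \<omega> in M. (\<epsilon> 2 \<omega> - \<epsilon> 1 \<omega>)\<^sup>2 = 0" by eventually_elim simp
  then have "(\<integral>\<omega>. (\<epsilon> 2 \<omega> - \<epsilon> 1 \<omega>)\<^sup>2 \<partial>M) = (\<integral>\<omega>. 0 \<partial>M)"
    using measurable_noise[of 1] measurable_noise[of 2] by (intro integral_cong_AE) auto
  then have "(\<integral>\<omega>. (\<epsilon> 1 \<omega>)\<^sup>2 \<partial>M) = 0"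
    using integral_noise_diff_sq unfolding noise_var_def by simp
  then have "AE \<omega> in M. (\<epsilon> 1 \<omega>)\<^sup>2 = 0"
    using square_integrable by (subst integral_nonneg_eq_0_iff_AE[symmetric]) auto
  then have "AE \<omega> in M. \<epsilon> 1 \<omega> = 0" by simp
  then show False using nondegenerate by blast
qed

lemma abs_pos_part_ratio_signal_noise_sub_half_le:
  fixes s :: "nat \<Rightarrow> real"
  assumes "n \<ge> 2"
    and variation: "(\<Sum>i=2..n. \<bar>s i - s (i - 1)\<bar>) \<le> C"
    and n_large: "4 * (mean_abs_diff + C) \<le> real n * mean_abs_diff"
      "2 * C \<le> e * (real n * mean_abs_diff)"
    and incr_small: "\<bar>\<Sum>i=2..n. centered_abs_incr i \<omega>\<bar> < real n * (mean_abs_diff / 4)"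
    and ends_small: "\<bar>\<epsilon> n \<omega>\<bar> < real n * (e * mean_abs_diff / 4)"
      "\<bar>\<epsilon> 1 \<omega>\<bar> < real n * (e * mean_abs_diff / 4)"
  shows "\<bar>pos_part_ratio (\<lambda>i. s i + \<epsilon> i \<omega>) n - 1/2\<bar> \<le> e"
proof -
  define \<tau> where "\<tau> = real n * mean_abs_diff / 2"
  have "0 < \<tau>" unfolding \<tau>_def using mean_abs_diff_pos assms(1) by simp
  have "(\<Sum>i=2..n. \<bar>\<epsilon> i \<omega> - \<epsilon> (i - 1) \<omega>\<bar>)
      = (\<Sum>i=2..n. centered_abs_incr i \<omega>) + (real n - 1) * mean_abs_diff"
    unfolding centered_abs_incr_def using assms(1) by (simp add: sum_subtractf of_nat_diff)
  moreover have "(\<Sum>i=2..n. \<bar>\<epsilon> i \<omega> - \<epsilon> (i - 1) \<omega>\<bar>) - (\<Sum>i=2..n. \<bar>s i - s (i - 1)\<bar>)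
      \<le> (\<Sum>i=2..n. \<bar>(s i + \<epsilon> i \<omega>) - (s (i - 1) + \<epsilon> (i - 1) \<omega>)\<bar>)"
    unfolding sum_subtractf[symmetric] by (intro sum_mono) linarith
  moreover have "4 * \<bar>\<Sum>i=2..n. centered_abs_incr i \<omega>\<bar> < real n * mean_abs_diff"
    using incr_small by simp
  ultimately have spread: "\<tau> \<le> (\<Sum>i=2..n. \<bar>(s i + \<epsilon> i \<omega>) - (s (i - 1) + \<epsilon> (i - 1) \<omega>)\<bar>)"
    using variation n_large(1) unfolding \<tau>_def by (simp add: algebra_simps abs_less_iff)
  moreover have "\<bar>s n - s 1\<bar> \<le> C"
  proof -
    have "s n - s 1 = (\<Sum>i=2..n. s i - s (i - 1))"
      using sum_telescope''[of 1 n s] assms(1) by (simp add: numeral_2_eq_2)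
    then show ?thesis using variation sum_abs[of "\<lambda>i. s i - s (i - 1)" "{2..n}"] by linarith
  qed
  moreover have "4 * \<bar>\<epsilon> n \<omega>\<bar> < e * (real n * mean_abs_diff)"
    "4 * \<bar>\<epsilon> 1 \<omega>\<bar> < e * (real n * mean_abs_diff)"
    using ends_small by (simp_all add: algebra_simps)
  moreover have "2 * e * \<tau> = e * (real n * mean_abs_diff)" unfolding \<tau>_def by simp
  ultimately have "\<bar>(s n + \<epsilon> n \<omega>) - (s 1 + \<epsilon> 1 \<omega>)\<bar> \<le> 2 * e * \<tau>"
    using n_large(2) by arith
  with spread show ?thesis
    using assms(1) \<open>0 < \<tau>\<close> by (intro abs_pos_part_ratio_sub_half_le) auto
qed

lemma measure_far_from_half_le:
  fixes s :: "nat \<Rightarrow> real"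
  assumes "n \<ge> 2"
    and variation: "(\<Sum>i=2..n. \<bar>s i - s (i - 1)\<bar>) \<le> C"
    and n_large: "4 * (mean_abs_diff + C) \<le> real n * mean_abs_diff"
      "2 * C \<le> e * (real n * mean_abs_diff)"
  defines "bad_incr \<equiv> {\<omega>\<in>space M. real n * (mean_abs_diff / 4) \<le> \<bar>\<Sum>i=2..n. centered_abs_incr i \<omega>\<bar>}"
    and "bad_noise \<equiv> \<lambda>k. {\<omega>\<in>space M. real n * (e * mean_abs_diff / 4) \<le> \<bar>\<epsilon> k \<omega>\<bar>}"
  shows "measure M {\<omega>\<in>space M. e < \<bar>pos_part_ratio (\<lambda>i. s i + \<epsilon> i \<omega>) n - 1/2\<bar>}
    \<le> measure M bad_incr + measure M (bad_noise n) + measure M (bad_noise 1)"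
proof -
  have incl: "{\<omega>\<in>space M. e < \<bar>pos_part_ratio (\<lambda>i. s i + \<epsilon> i \<omega>) n - 1/2\<bar>}
      \<subseteq> bad_incr \<union> bad_noise n \<union> bad_noise 1"
  proof (rule subsetI, rule ccontr)
    fix \<omega> assume "\<omega> \<in> {\<omega>\<in>space M. e < \<bar>pos_part_ratio (\<lambda>i. s i + \<epsilon> i \<omega>) n - 1/2\<bar>}"
      and good: "\<omega> \<notin> bad_incr \<union> bad_noise n \<union> bad_noise 1"
    then have "\<omega> \<in> space M" and far: "e < \<bar>pos_part_ratio (\<lambda>i. s i + \<epsilon> i \<omega>) n - 1/2\<bar>"
      by auto
    with good have "\<bar>\<Sum>i=2..n. centered_abs_incr i \<omega>\<bar> < real n * (mean_abs_diff / 4)"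
      "\<bar>\<epsilon> n \<omega>\<bar> < real n * (e * mean_abs_diff / 4)" "\<bar>\<epsilon> 1 \<omega>\<bar> < real n * (e * mean_abs_diff / 4)"
      unfolding bad_incr_def bad_noise_def by (simp_all add: not_le)
    then have "\<bar>pos_part_ratio (\<lambda>i. s i + \<epsilon> i \<omega>) n - 1/2\<bar> \<le> e"
      using abs_pos_part_ratio_signal_noise_sub_half_le[OF assms(1) variation n_large] by blast
    with far show False by simp
  qed
  have [measurable]: "(\<lambda>\<omega>. \<Sum>i=2..n. centered_abs_incr i \<omega>) \<in> borel_measurable M"
    by (intro borel_measurable_sum measurable_centered_abs_incr) auto
  have [measurable]: "\<epsilon> n \<in> borel_measurable M" "\<epsilon> 1 \<in> borel_measurable M"
    using measurable_noise assms(1) by auto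
  have sets: "bad_incr \<in> sets M" "bad_noise n \<in> sets M" "bad_noise 1 \<in> sets M"
    unfolding bad_incr_def bad_noise_def by measurable
  have "measure M {\<omega>\<in>space M. e < \<bar>pos_part_ratio (\<lambda>i. s i + \<epsilon> i \<omega>) n - 1/2\<bar>}
      \<le> measure M (bad_incr \<union> bad_noise n \<union> bad_noise 1)"
    using incl sets by (intro finite_measure_mono) auto
  also have "\<dots> \<le> measure M bad_incr + measure M (bad_noise n) + measure M (bad_noise 1)"
    using sets by (meson add_right_mono measure_Un_le order_trans sets.Un)
  finally show ?thesis .
qed

theorem conv_in_prob_pos_part_ratio_half:
  fixes s :: "nat \<Rightarrow> nat \<Rightarrow> real"
  assumes variation: "\<And>n. n \<ge> 2 \<Longrightarrow> (\<Sum>i=2..n. \<bar>s n i - s n (i - 1)\<bar>) \<le> C"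
  shows "conv_in_prob M (\<lambda>n \<omega>. pos_part_ratio (\<lambda>i. s n i + \<epsilon> i \<omega>) n) (1/2)"
  unfolding conv_in_prob_def
proof (intro allI impI)
  fix e :: real assume "e > 0"
  define \<mu> where "\<mu> = mean_abs_diff"
  have "\<mu> > 0" unfolding \<mu>_def by (rule mean_abs_diff_pos)
  define bad_noise where
    "bad_noise n k = {\<omega>\<in>space M. real n * (e * \<mu> / 4) \<le> \<bar>\<epsilon> k \<omega>\<bar>}" for n k
  define bound where "bound n =
    measure M {\<omega>\<in>space M. real n * (\<mu> / 4) \<le> \<bar>\<Sum>i=2..n. centered_abs_incr i \<omega>\<bar>}
      + measure M (bad_noise n n) + measure M (bad_noise n 1)" for n
  have bound_lim: "bound \<longlonglongrightarrow> 0"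
    using \<open>\<mu> > 0\<close> \<open>e > 0\<close> eventually_ge_at_top[of 1] unfolding bound_def bad_noise_def
    by (intro tendsto_add_zero tendsto_measure_abs_sum_centered_abs_incr_ge tendsto_measure_abs_noise_ge) auto
  have "\<forall>\<^sub>F n in sequentially. Z \<le> real n" for Z
    using filterlim_real_sequentially unfolding filterlim_at_top by blast
  then have "\<forall>\<^sub>F n in sequentially. 4 * (\<mu> + C) / \<mu> \<le> real n \<and> 2 * C / (e * \<mu>) \<le> real n \<and> n \<ge> 2"
    by (intro eventually_conj eventually_ge_at_top)
  then have bounded_by: "\<forall>\<^sub>F n in sequentially.
      measure M {\<omega>\<in>space M. e < \<bar>pos_part_ratio (\<lambda>i. s n i + \<epsilon> i \<omega>) n - 1/2\<bar>} \<le> bound n"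
  proof eventually_elim
    case (elim n)
    have "4 * (\<mu> + C) \<le> real n * \<mu>"
      using elim \<open>\<mu> > 0\<close> by (blast intro: iffD1[OF pos_divide_le_eq])
    moreover have "2 * C \<le> real n * (e * \<mu>)"
      using elim \<open>\<mu> > 0\<close> \<open>e > 0\<close> by (blast intro: iffD1[OF pos_divide_le_eq] mult_pos_pos)
    ultimately have "4 * (mean_abs_diff + C) \<le> real n * mean_abs_diff"
      "2 * C \<le> e * (real n * mean_abs_diff)"
      unfolding \<mu>_def by (metis mult.left_commute)+
    then show ?case
      unfolding bound_def bad_noise_def \<mu>_def
      by (intro measure_far_from_half_le) (use elim variation[of n] in auto)
  qed
  show "(\<lambda>n. measure M {\<omega>\<in>space M. e < \<bar>pos_part_ratio (\<lambda>i. s n i + \<epsilon> i \<omega>) n - 1/2\<bar>})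
      \<longlonglongrightarrow> 0"
    by (rule tendsto_sandwich[OF _ bounded_by tendsto_const bound_lim]) simp
qed

end

theorem theorem5:
  fixes M :: "'a measure" and a b :: real and h h' :: "real \<Rightarrow> real"
    and \<epsilon> :: "nat \<Rightarrow> 'a \<Rightarrow> real"
  assumes "prob_space M"
    and "a < b"
    and "\<forall>x\<in>{a..b}. (h has_real_derivative h' x) (at x within {a..b})"
    and "continuous_on {a..b} h'"
    and "bounded (h' ` {a..b})"
    and "prob_space.indep_vars M (\<lambda>_. borel) \<epsilon> {1..}"
    and "\<forall>i\<ge>1. distr M borel (\<epsilon> i) = distr M borel (\<epsilon> 1)"
    and "\<not> (\<exists>c. AE \<omega> in M. \<epsilon> 1 \<omega> = c)"
    and "integrable M (\<epsilon> 1)" and "(\<integral>\<omega>. \<epsilon> 1 \<omega> \<partial>M) = 0"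
    and "integrable M (\<lambda>\<omega>. (\<epsilon> 1 \<omega>)\<^sup>2)"
  defines "Y \<equiv> \<lambda>n i \<omega>. h (design_pt a b n i) + \<epsilon> i \<omega>"
  defines "A \<equiv> \<lambda>n \<omega>. (1 / sqrt (real n)) * (\<Sum>i=2..n. pos_part (Y n i \<omega> - Y n (i - 1) \<omega>))"
  defines "B \<equiv> \<lambda>n \<omega>. (1 / sqrt (real n)) * (\<Sum>i=2..n. \<bar>Y n i \<omega> - Y n (i - 1) \<omega>\<bar>)"
  shows "conv_in_prob M (\<lambda>n \<omega>. A n \<omega> / B n \<omega>) (1/2)"
proof -
  interpret iid_noise M \<epsilon>
    using assms(7) by (intro iid_noise.intro iid_noise_axioms.intro assms(1,6,8,10,11)) blast
  obtain L where "\<And>x y. x \<in> {a..b} \<Longrightarrow> y \<in> {a..b} \<Longrightarrow> \<bar>h x - h y\<bar> \<le> L * \<bar>x - y\<bar>"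
    using lipschitz_on_interval_if_deriv_bounded[OF assms(3,5)] by blast
  then have "(\<Sum>i=2..n. \<bar>h (design_pt a b n i) - h (design_pt a b n (i - 1))\<bar>) \<le> L * (b - a)"
    if "n \<ge> 2" for n
    using assms(2) that by (intro sum_abs_diff_design_pt_le) auto
  then have "conv_in_prob M (\<lambda>n \<omega>. pos_part_ratio (\<lambda>i. Y n i \<omega>) n) (1/2)"
    unfolding Y_def by (rule conv_in_prob_pos_part_ratio_half)
  moreover have "A n \<omega> / B n \<omega> = pos_part_ratio (\<lambda>i. Y n i \<omega>) n" for n \<omega>
    by (cases "n = 0") (simp_all add: A_def B_def pos_part_ratio_def)
  ultimately show ?thesis by simp
qed

end
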